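(* Fix $q\in(0,1]$ and $s\in(0,2]$. As $d\to\infty$, $$\bar\sigma_{0,q}^2(s,d)=\frac{2q}d+\frac{(2-s)(6-q)}{2d^2}+o\Big(\frac1{d^2}\Big).$$
   Context: For $q\in(0,1]$, integer $d\ge1$ and $s>0$: $q_d(n)=\binom dn(q/2)^n(1-q/2)^{d-n}$, $I_{0,q}(s,d)=q^{-s}2^{s/2}\sum_{n=1}^dq_d(n)\Gamma(n/2+s/2)/\Gamma(n/2)$, and $\bar\sigma_{0,q}(s,d)=I_{0,q}(s,d)^{-1/s}$. (This is the critical weight standard deviation preserving the $s$-th moment of layer-output norms in a zero-bias width-$d$ ReLU network with i.i.d. $\mathcal N(0,\sigma^2)$ weights and dropout with keep probability $q$ and rescaling $1/q$.) *)

theory Defs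
  imports "HOL-Analysis.Analysis" "HOL-Library.Landau_Symbols"
begin

definition qd :: "real \<Rightarrow> nat \<Rightarrow> nat \<Rightarrow> real" where
  "qd q d n = real (d choose n) * (q/2)^n * (1 - q/2)^(d-n)"

definition I0 :: "real \<Rightarrow> real \<Rightarrow> nat \<Rightarrow> real" where
  "I0 q s d = q powr (-s) * 2 powr (s/2) *
     (\<Sum>n=1..d. qd q d n * Gamma (real n/2 + s/2) / Gamma (real n/2))"

definition sigma_bar :: "real \<Rightarrow> real \<Rightarrow> nat \<Rightarrow> real" where
  "sigma_bar q s d = I0 q s d powr (-1/s)"

end

theory Submission
  imports Defs "HOL-Real_Asymp.Real_Asymp"
begin

(* With a = s/2 and p = q/2, I_{0,q}(s,d) is q^-s 2^(s/2) times the mean of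
   Gamma(N/2 + a) / Gamma(N/2) for N ~ Binomial(d, p).  Telescoping ln Gamma against
   Gauss's limit formula gives Gamma(x + a) / Gamma(x) = x^a (1 + a(a-1)/(2x) + O(x^-2)).
   Expanding this to second order in the relative deviation t = (N - mu)/mu around the mean
   mu = dp, the binomial moments E t = 0, E t^2 = (1-p)/mu and E t^4 = O(mu^-2) give the mean
   2^-a mu^a (1 + a(a-1)(3-p)/(2 mu) + O(mu^-3/2)).  Hence sigma_bar^2 = (2q/d) (1 + X)^(-1/a)
   with X = a(a-1)(3-p)/(2 mu) + O(d^-3/2), and (1 + X)^(-1/a) = 1 - X/a + O(X^2). *)

lemma mult_one_minus_le_quarter: "a * (1 - a) \<le> (1/4 :: real)"
  using zero_le_power2[of "a - 1/2"] by (simp add: power2_eq_square algebra_simps)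

lemma abs_le_inverse_plus_square:
  fixes s t :: real assumes "s > 0" shows "\<bar>t\<bar> \<le> 1/s + s * t^2"
proof -
  have "2 * (s * \<bar>t\<bar>) \<le> 1 + (s * \<bar>t\<bar>)^2"
    using zero_le_power2[of "s * \<bar>t\<bar> - 1"] by (simp add: power2_eq_square algebra_simps)
  moreover have "(s * \<bar>t\<bar>)^2 = s^2 * t^2" by (simp add: power_mult_distrib)
  moreover have "0 \<le> s * \<bar>t\<bar>" using assms by simp
  ultimately have "s * \<bar>t\<bar> \<le> 1 + s^2 * t^2" by linarith
  then show ?thesis using assms by (simp add: field_simps power2_eq_square)
qed

lemma ln_one_plus_ge_quadratic:
  fixes t :: real assumes "0 \<le> t" shows "t - t^2/2 \<le> ln (1 + t)"
proof -
  have "(\<lambda>t. ln (1 + t) - t + t^2/2) 0 \<le> (\<lambda>t. ln (1 + t) - t + t^2/2) t"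
  proof (rule DERIV_nonneg_imp_nondecreasing[OF assms])
    fix x :: real assume "0 \<le> x"
    then show "\<exists>y. ((\<lambda>t. ln (1 + t) - t + t^2/2) has_real_derivative y) (at x) \<and> 0 \<le> y"
      by (intro exI[of _ "1/(1 + x) - 1 + x"] conjI) (auto intro!: derivative_eq_intros simp: field_simps)
  qed
  then show ?thesis by simp
qed

lemma ln_one_plus_le_cubic:
  fixes t :: real assumes "0 \<le> t" shows "ln (1 + t) \<le> t - t^2/2 + t^3/3"
proof -
  have "(\<lambda>t. t - t^2/2 + t^3/3 - ln (1 + t)) 0 \<le> (\<lambda>t. t - t^2/2 + t^3/3 - ln (1 + t)) t"
  proof (rule DERIV_nonneg_imp_nondecreasing[OF assms])
    fix x :: real assume x: "0 \<le> x"
    have "1 - x + x^2 - 1/(1 + x) = x^3/(1 + x)"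
      using x by (simp add: field_simps power3_eq_cube power2_eq_square)
    with x show "\<exists>y. ((\<lambda>t. t - t^2/2 + t^3/3 - ln (1 + t)) has_real_derivative y) (at x) \<and> 0 \<le> y"
      by (intro exI[of _ "1 - x + x^2 - 1/(1 + x)"] conjI)
        (auto intro!: derivative_eq_intros simp: field_simps power2_eq_square power3_eq_cube)
  qed
  then show ?thesis by simp
qed

lemma abs_exp_minus_one_minus_le:
  fixes w :: real assumes "w \<le> 1" shows "\<bar>exp w - 1 - w\<bar> \<le> w^2"
proof (cases "0 \<le> w")
  case True
  then show ?thesis
    using exp_bound[OF True assms] exp_ge_add_one_self[of w] zero_le_power2[of w]
    by (simp only: abs_le_iff) linarith
next
  case False
  define u where "u = -w"
  have u: "u > 0" using False u_def by auto
  have pos: "0 < 1 + u + u^2/2" using u by (simp add: add_pos_nonneg)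
  have "exp w = 1 / exp u" by (simp add: u_def exp_minus field_simps)
  also have "\<dots> \<le> 1 / (1 + u + u^2/2)"
    using exp_lower_Taylor_quadratic[of u] u pos by (intro divide_left_mono) auto
  also have "\<dots> \<le> 1 - u + u^2"
  proof -
    have "(1 - u + u^2) * (1 + u + u^2/2) = 1 + u^2/2 + u^3/2 + u^4/2"
      by (simp add: field_simps eval_nat_numeral)
    also have "\<dots> \<ge> 1" using u by simp
    finally show ?thesis using pos by (simp add: divide_le_eq)
  qed
  finally have "exp w \<le> 1 + w + w^2" by (simp add: u_def)
  then show ?thesis using exp_ge_add_one_self[of w] zero_le_power2[of w]
    by (simp only: abs_le_iff) linarith
qed

section \<open>The ratio \<open>\<Gamma>(x + a) / \<Gamma>(x)\<close>\<close>

definition gamma_ratio_error :: "real \<Rightarrow> real \<Rightarrow> real" where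
  "gamma_ratio_error a x = ln (Gamma (x + a)) - ln (Gamma x) - a * ln x - a * (a - 1) / (2 * x)"

lemma Gamma_real_plus1: "x > 0 \<Longrightarrow> Gamma (x + 1) = x * Gamma (x :: real)"
  by (rule Gamma_plus1) auto

lemma gamma_ratio_error_step:
  fixes a x :: real assumes "x > 0" "a > 0"
  shows "gamma_ratio_error a (x + 1) - gamma_ratio_error a x =
    ln (1 + a * (1/x)) - a * ln (1 + 1/x) + a * (a - 1) * (1/x)^2 / (2 * (1 + 1/x))"
proof -
  have "ln (Gamma (x + 1 + a)) = ln (x + a) + ln (Gamma (x + a))"
    using Gamma_real_plus1[of "x + a"] assms by (simp add: add_ac ln_mult_pos)
  moreover have "ln (Gamma (x + 1)) = ln x + ln (Gamma x)"
    using Gamma_real_plus1[of x] assms by (simp add: ln_mult_pos)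
  moreover have "ln (1 + a * (1/x)) = ln (x + a) - ln x" "ln (1 + 1/x) = ln (x + 1) - ln x"
    using assms by (simp_all add: field_simps ln_div)
  moreover have "a * (a - 1) * (1/x)^2 / (2 * (1 + 1/x)) = a * (a - 1) / (2 * x) - a * (a - 1) / (2 * (x + 1))"
    using assms by (simp add: divide_simps power2_eq_square) (simp add: algebra_simps)
  ultimately show ?thesis
    unfolding gamma_ratio_error_def by (simp add: right_diff_distrib)
qed

lemma abs_ln_one_plus_mult_remainder_le:
  fixes a u :: real assumes a: "0 < a" "a \<le> 1" and u: "0 < u" "u \<le> 1"
  shows "\<bar>ln (1 + a * u) - a * ln (1 + u) + a * (a - 1) * u^2 / (2 * (1 + u))\<bar> \<le> u^3"
proof -
  have au: "0 \<le> a * u" using a u by simp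
  have ln_au: "a * u - a^2 * u^2 / 2 \<le> ln (1 + a * u)" "ln (1 + a * u) \<le> a * u - a^2 * u^2 / 2 + a^3 * u^3 / 3"
    using ln_one_plus_ge_quadratic[OF au] ln_one_plus_le_cubic[OF au] by (simp_all add: power_mult_distrib)
  have "a * (u - u^2/2) \<le> a * ln (1 + u)" "a * ln (1 + u) \<le> a * (u - u^2/2 + u^3/3)"
    using ln_one_plus_ge_quadratic[of u] ln_one_plus_le_cubic[of u] u a by (simp_all add: mult_left_mono)
  then have ln_u: "a * u - a * u^2 / 2 \<le> a * ln (1 + u)" "a * ln (1 + u) \<le> a * u - a * u^2 / 2 + a * u^3 / 3"
    by (simp_all add: algebra_simps)
  have split: "a * (a - 1) * u^2 / (2 * (1 + u)) = - (a * (1 - a) * u^2 / 2) + a * (1 - a) * u^3 / (2 * (1 + u))"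
    using u by (simp add: field_simps power2_eq_square power3_eq_cube)
  have aa: "0 \<le> a * (1 - a)" using a by simp
  then have "0 \<le> a * (1 - a) * u^3 / (2 * (1 + u))" using u by simp
  moreover have "a * (1 - a) * u^3 / (2 * (1 + u)) \<le> (1/4) * u^3 / 2"
    using u aa mult_one_minus_le_quarter[of a]
    by (intro frac_le mult_right_mono) auto
  moreover have "a * (1 - a) * u^2 = a * u^2 - a^2 * u^2" by (simp add: algebra_simps power2_eq_square)
  moreover have "a * u^3 \<le> u^3" "a^3 * u^3 \<le> u^3" "0 \<le> a * u^3"
    using a u by (simp_all add: power_le_one)
  ultimately show ?thesis unfolding split abs_le_iff using ln_au ln_u by (intro conjI) linarith+
qed

lemma gamma_ratio_error_shift_tendsto:
  fixes x a :: real assumes x: "x > 0" and a: "a > 0"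
  shows "(\<lambda>m. gamma_ratio_error a (x + real m)) \<longlonglongrightarrow> 0"
proof -
  define L where "L = Gamma (x + a) / Gamma x"
  define R where "R m = Gamma_series (x + a) m / Gamma_series x m" for m
  have gp: "Gamma (x + a) > 0" "Gamma x > 0" using x a by auto
  have "R \<longlonglongrightarrow> L"
    unfolding L_def R_def using gp by (intro tendsto_divide Gamma_series_LIMSEQ) auto
  then have lnR: "(\<lambda>m. ln (R m)) \<longlonglongrightarrow> ln L"
    by (rule tendsto_ln) (use gp in \<open>simp add: L_def\<close>)
  have key: "gamma_ratio_error a (x + real (Suc m)) =
      ln L - ln (R m) - a * ln ((x + real (Suc m)) / real m) - a * (a - 1) / (2 * (x + real (Suc m)))"
    if m: "m \<ge> 1" for m
  proof -
    define y where "y = x + real (Suc m)"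
    have gy: "Gamma y > 0" "Gamma (y + a) > 0" using x a by (auto simp: y_def)
    have "pochhammer x (Suc m) = Gamma y / Gamma x"
      using pochhammer_Gamma[of x "Suc m"] nonpos_Ints_nonpos[of x] x by (force simp: y_def)
    moreover have "pochhammer (x + a) (Suc m) = Gamma (y + a) / Gamma (x + a)"
      using pochhammer_Gamma[of "x + a" "Suc m"] nonpos_Ints_nonpos[of "x + a"] x a
      by (force simp: y_def add_ac)
    ultimately have "R m = (fact m * exp ((x + a) * ln (real m)) / (Gamma (y + a) / Gamma (x + a)))
        / (fact m * exp (x * ln (real m)) / (Gamma y / Gamma x))"
      unfolding R_def Gamma_series_def by simp
    also have "\<dots> = exp (a * ln (real m)) * (Gamma y / Gamma x) * (Gamma (x + a) / Gamma (y + a))"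
      using gp gy by (simp add: field_simps distrib_right exp_add)
    finally have "ln (R m) = a * ln (real m) + (ln (Gamma y) - ln (Gamma x)) + (ln (Gamma (x + a)) - ln (Gamma (y + a)))"
      using gp gy by (simp add: ln_mult_pos ln_divide_pos)
    moreover have "ln L = ln (Gamma (x + a)) - ln (Gamma x)" unfolding L_def using gp by (simp add: ln_divide_pos)
    moreover have "a * ln (y / real m) = a * ln y - a * ln (real m)"
      using x m by (simp add: y_def ln_divide_pos algebra_simps)
    ultimately show ?thesis unfolding y_def[symmetric] gamma_ratio_error_def by linarith
  qed
  have "(\<lambda>m. (x + real (Suc m)) / real m) \<longlonglongrightarrow> 1" by real_asymp
  then have "(\<lambda>m. ln ((x + real (Suc m)) / real m)) \<longlonglongrightarrow> 0" using tendsto_ln by fastforce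
  moreover have "(\<lambda>m. a * (a - 1) / (2 * (x + real (Suc m)))) \<longlonglongrightarrow> 0" by real_asymp
  ultimately have "(\<lambda>m. ln L - ln (R m) - a * ln ((x + real (Suc m)) / real m) - a * (a - 1) / (2 * (x + real (Suc m))))
      \<longlonglongrightarrow> ln L - ln L - a * 0 - 0"
    by (intro tendsto_intros lnR)
  moreover have "eventually (\<lambda>m. ln L - ln (R m) - a * ln ((x + real (Suc m)) / real m)
      - a * (a - 1) / (2 * (x + real (Suc m))) = gamma_ratio_error a (x + real (Suc m))) sequentially"
    using eventually_ge_at_top[of "1::nat"] by eventually_elim (rule key[symmetric])
  ultimately have "(\<lambda>m. gamma_ratio_error a (x + real (Suc m))) \<longlonglongrightarrow> 0"
    by (simp add: Lim_transform_eventually)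
  then show ?thesis by (rule LIMSEQ_imp_Suc)
qed

lemma inverse_cube_le_telescope:
  fixes y :: real assumes "y \<ge> 1"
  shows "(1/y)^3 \<le> (1/2) * (1/(y - 1/2)^2 - 1/(y + 1/2)^2)"
proof -
  have sq: "(y - 1/2)^2 * (y + 1/2)^2 = (y^2 - 1/4)^2" by (simp add: power2_eq_square algebra_simps)
  have pos: "0 < y^2 - 1/4" using one_le_power[OF assms, of 2] by simp
  have "1/(y - 1/2)^2 - 1/(y + 1/2)^2 = ((y + 1/2)^2 - (y - 1/2)^2) / (y^2 - 1/4)^2"
    using assms by (simp add: sq[symmetric] diff_divide_distrib)
  then have "(1/2) * (1/(y - 1/2)^2 - 1/(y + 1/2)^2) = y / (y^2 - 1/4)^2"
    by (simp add: power2_eq_square algebra_simps)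
  moreover have "(1/y)^3 = y / (y^2)^2" using assms by (simp add: field_simps power2_eq_square power3_eq_cube)
  moreover have "(y^2 - 1/4)^2 \<le> (y^2)^2" using pos by (intro power_mono) auto
  ultimately show ?thesis using assms pos by (simp add: frac_le)
qed

lemma abs_gamma_ratio_error_le_shift:
  fixes a x :: real assumes a: "0 < a" "a \<le> 1" and x: "x \<ge> 1"
  shows "\<bar>gamma_ratio_error a x\<bar> \<le> \<bar>gamma_ratio_error a (x + real M)\<bar> + 2/x^2"
proof -
  define g where "g k = gamma_ratio_error a (x + real k)" for k
  define h where "h k = (1/2) * (1/(x + real k - 1/2)^2)" for k
  have step: "\<bar>g (Suc k) - g k\<bar> \<le> h k - h (Suc k)" for k
  proof -
    have "g (Suc k) - g k = ln (1 + a * (1/(x + real k))) - a * ln (1 + 1/(x + real k))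
        + a * (a - 1) * (1/(x + real k))^2 / (2 * (1 + 1/(x + real k)))"
      using gamma_ratio_error_step[of "x + real k" a] a x by (simp add: g_def add_ac)
    also have "\<bar>\<dots>\<bar> \<le> (1/(x + real k))^3"
      using a x by (intro abs_ln_one_plus_mult_remainder_le) auto
    also have "\<dots> \<le> h k - h (Suc k)"
      using inverse_cube_le_telescope[of "x + real k"] x by (simp add: h_def algebra_simps)
    finally show ?thesis .
  qed
  have "\<bar>g M - g 0\<bar> = \<bar>\<Sum>k<M. g (Suc k) - g k\<bar>" by (simp add: sum_lessThan_telescope)
  also have "\<dots> \<le> (\<Sum>k<M. h k - h (Suc k))" by (rule order_trans[OF sum_abs sum_mono]) (rule step)
  also have "\<dots> = h 0 - h M" by (rule sum_lessThan_telescope')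
  also have "\<dots> \<le> h 0" by (simp add: h_def)
  also have "\<dots> \<le> 2/x^2"
  proof -
    have "(x/2)^2 \<le> (x - 1/2)^2" using x by (intro power_mono) auto
    then have "1/(x - 1/2)^2 \<le> 1/(x/2)^2" using x by (intro divide_left_mono) auto
    then show ?thesis by (simp add: h_def power_divide)
  qed
  finally show ?thesis by (simp add: g_def)
qed

lemma abs_gamma_ratio_error_le:
  fixes a x :: real assumes a: "0 < a" "a \<le> 1" and x: "x \<ge> 1"
  shows "\<bar>gamma_ratio_error a x\<bar> \<le> 2/x^2"
proof -
  have "(\<lambda>M. \<bar>gamma_ratio_error a (x + real M)\<bar> + 2/x^2) \<longlonglongrightarrow> \<bar>0\<bar> + 2/x^2"
    using a x by (intro tendsto_intros gamma_ratio_error_shift_tendsto) auto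
  then show ?thesis
    using abs_gamma_ratio_error_le_shift[OF a x] by (auto intro: LIMSEQ_le_const)
qed

lemma Gamma_ratio_approx:
  fixes a x :: real assumes a: "0 < a" "a \<le> 1" and x: "x \<ge> 2"
  shows "\<bar>Gamma (x + a) / Gamma x - x powr a * (1 + a * (a - 1) / (2 * x))\<bar> \<le> 4 * x powr (a - 2)"
proof -
  define v where "v = gamma_ratio_error a x"
  define c where "c = a * (a - 1) / (2 * x)"
  have v: "\<bar>v\<bar> \<le> 2/x^2" unfolding v_def using abs_gamma_ratio_error_le[OF a] x by simp
  have "\<bar>c\<bar> = a * (1 - a) / (2 * x)" using a x by (simp add: c_def abs_mult algebra_simps)
  also have "\<dots> \<le> (1/4) / (2 * x)" using x mult_one_minus_le_quarter[of a] by (intro divide_right_mono) auto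
  finally have c: "\<bar>c\<bar> \<le> (1/8) / x" by simp
  have "2/x^2 \<le> 1/x" using x by (simp add: field_simps power2_eq_square)
  then have w: "\<bar>c + v\<bar> \<le> (9/8) / x" using c v by (simp add: abs_triangle_ineq[THEN order_trans])
  moreover have "(9/8) / x \<le> 1" using x by simp
  ultimately have w1: "c + v \<le> 1" by linarith
  have "Gamma (x + a) > 0" "Gamma x > 0" using x a by auto
  then have "Gamma (x + a) / Gamma x = exp (a * ln x + (c + v))"
    by (simp add: v_def c_def gamma_ratio_error_def exp_diff)
  then have ratio: "Gamma (x + a) / Gamma x = x powr a * exp (c + v)"
    using x by (simp add: powr_def exp_add)
  have "(c + v)^2 \<le> ((9/8) / x)^2" using w by (metis abs_ge_zero power2_abs power_mono)
  then have "\<bar>exp (c + v) - 1 - (c + v)\<bar> + \<bar>v\<bar> \<le> 4/x^2"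
    using abs_exp_minus_one_minus_le[OF w1] v by (simp add: power_divide)
  moreover have "\<bar>exp (c + v) - 1 - c\<bar> \<le> \<bar>exp (c + v) - 1 - (c + v)\<bar> + \<bar>v\<bar>" by linarith
  ultimately have "x powr a * \<bar>exp (c + v) - 1 - c\<bar> \<le> x powr a * (4/x^2)"
    by (intro mult_left_mono) auto
  moreover have "x powr a * (4/x^2) = 4 * x powr (a - 2)"
    using x by (simp add: powr_diff)
  moreover have "\<bar>x powr a * exp (c + v) - x powr a * (1 + c)\<bar> = x powr a * \<bar>exp (c + v) - 1 - c\<bar>"
    by (simp add: abs_mult diff_diff_eq flip: right_diff_distrib)
  ultimately show ?thesis unfolding ratio c_def[symmetric] by linarith
qed

section \<open>Expansions of \<open>(1 + t) powr a\<close>\<close>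

definition one_plus_powr_nth_deriv :: "real \<Rightarrow> nat \<Rightarrow> real \<Rightarrow> real" where
  "one_plus_powr_nth_deriv a m t = (\<Prod>i<m. a - real i) * (1 + t) powr (a - real m)"

lemma one_plus_powr_nth_deriv_has_derivative:
  assumes "t > -1"
  shows "(one_plus_powr_nth_deriv a m has_real_derivative one_plus_powr_nth_deriv a (Suc m) t) (at t)"
proof -
  have "((\<lambda>t. (\<Prod>i<m. a - real i) * (1 + t) powr (a - real m)) has_real_derivative
      (\<Prod>i<m. a - real i) * ((a - real m) * (1 + t) powr (a - real (Suc m)))) (at t)"
    using assms by (auto intro!: derivative_eq_intros simp: algebra_simps)
  then show ?thesis by (simp add: one_plus_powr_nth_deriv_def[abs_def] mult.assoc)
qed

lemma abs_one_plus_powr_taylor2_le: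
  fixes a t :: real assumes a: "0 < a" "a \<le> 1" and t: "t \<ge> -1/2"
  shows "\<bar>(1 + t) powr a - 1 - a * t - a * (a - 1) / 2 * t^2\<bar> \<le> \<bar>t\<bar>^3"
proof (cases "t = 0")
  case False
  let ?D = "one_plus_powr_nth_deriv a"
  have "\<exists>z. (if t < 0 then t < z \<and> z < 0 else 0 < z \<and> z < t) \<and>
      (1 + t) powr a = (\<Sum>m<3. ?D m 0 / fact m * (t - 0)^m) + ?D 3 z / fact 3 * (t - 0)^3"
  proof (rule Taylor[where f = "\<lambda>t. (1 + t) powr a" and a = "-1/2" and b = "max t 0"])
    show "?D 0 = (\<lambda>t. (1 + t) powr a)" by (simp add: one_plus_powr_nth_deriv_def[abs_def])
  qed (use t False in \<open>auto intro!: one_plus_powr_nth_deriv_has_derivative\<close>)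
  then obtain z where "if t < 0 then t < z \<and> z < 0 else 0 < z \<and> z < t"
    and taylor: "(1 + t) powr a = (\<Sum>m<3. ?D m 0 / fact m * (t - 0)^m) + ?D 3 z / fact 3 * (t - 0)^3"
    by blast
  then have z: "-1/2 < z" using t by (auto split: if_splits)
  have "(\<Sum>m<3. ?D m 0 / fact m * (t - 0)^m) = 1 + a * t + a * (a - 1) / 2 * t^2"
    by (simp add: one_plus_powr_nth_deriv_def eval_nat_numeral lessThan_Suc fact_numeral algebra_simps)
  moreover have "?D 3 z = (a * (1 - a)) * (2 - a) * (1 + z) powr (a - 3)"
    by (simp add: one_plus_powr_nth_deriv_def eval_nat_numeral lessThan_Suc algebra_simps)
  ultimately have remainder: "(1 + t) powr a - 1 - a * t - a * (a - 1) / 2 * t^2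
      = (a * (1 - a)) * (2 - a) * (1 + z) powr (a - 3) / 6 * t^3"
    using taylor by (simp add: fact_numeral)
  have "\<bar>(1 + t) powr a - 1 - a * t - a * (a - 1) / 2 * t^2\<bar>
      = (a * (1 - a)) * (2 - a) * (1 + z) powr (a - 3) / 6 * \<bar>t\<bar>^3"
    unfolding remainder using a by (simp add: abs_mult power_abs)
  also have "\<dots> \<le> ((1/4) * 2) * 8 / 6 * \<bar>t\<bar>^3"
  proof (intro mult_right_mono divide_right_mono mult_mono)
    have "(1 + z) powr (a - 3) \<le> (1/2) powr (a - 3)" using z a by (intro powr_mono2') auto
    also have "\<dots> = 2 powr (3 - a)" by (simp add: powr_divide powr_minus_divide[symmetric])
    also have "\<dots> \<le> 2 powr 3" using a by (intro powr_mono) auto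
    finally show "(1 + z) powr (a - 3) \<le> 8" by simp
  qed (use a mult_one_minus_le_quarter[of a] in auto)
  finally show ?thesis using zero_le_power[OF abs_ge_zero[of t], of 3] by linarith
qed simp

lemma abs_powr_minus_one_le:
  fixes b t :: real assumes b: "-1 \<le> b" "b \<le> 0" and t: "t \<ge> 1/2"
  shows "\<bar>t powr b - 1\<bar> \<le> 2 * \<bar>t - 1\<bar>"
proof (cases "t \<ge> 1")
  case True
  have "t powr (-1) \<le> t powr b" "t powr b \<le> t powr 0"
    using True b by (intro powr_mono; simp)+
  moreover have "t powr (-1) = 1/t" "t powr 0 = 1" using True by (simp_all add: powr_minus_divide)
  ultimately have "1/t \<le> t powr b" "t powr b \<le> 1" by linarith+
  moreover have "1 - 1/t \<le> t - 1"
  proof -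
    have "0 \<le> (t - 1)^2 / t" using True by simp
    also have "\<dots> = t - 2 + 1/t" using True by (simp add: field_simps power2_eq_square)
    finally show ?thesis by linarith
  qed
  ultimately show ?thesis using True by (simp add: abs_le_iff)
next
  case False
  have "t powr 0 \<le> t powr b" "t powr b \<le> t powr (-1)"
    using False b t by (intro powr_mono'; simp)+
  moreover have "t powr (-1) = 1/t" "t powr 0 = 1" using t by (simp_all add: powr_minus_divide)
  ultimately have "1 \<le> t powr b" "t powr b \<le> 1/t" by linarith+
  moreover have "1/t - 1 \<le> 2 - 2 * t"
  proof -
    have "0 \<le> (2 * t - 1) * (1 - t)" using t False by simp
    then have "1 \<le> t * (3 - 2 * t)" by (simp add: algebra_simps)
    then have "1/t \<le> 3 - 2 * t" using t by (simp add: divide_le_eq mult.commute)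
    then show ?thesis by simp
  qed
  ultimately show ?thesis using False by (simp add: abs_le_iff)
qed

lemma abs_powr_one_plus_minus_linear_le:
  fixes r X :: real assumes X: "\<bar>X\<bar> \<le> 1/2" "2 * \<bar>r\<bar> * \<bar>X\<bar> \<le> 1"
  shows "\<bar>(1 + X) powr r - 1 - r * X\<bar> \<le> (4 * r^2 + 2 * \<bar>r\<bar>) * X^2"
proof -
  define l where "l = ln (1 + X)"
  have lX: "\<bar>l - X\<bar> \<le> 2 * X^2" unfolding l_def using abs_ln_one_plus_x_minus_x_bound[OF X(1)] .
  have "2 * X^2 \<le> \<bar>X\<bar>"
    using X(1) mult_right_mono[of "2 * \<bar>X\<bar>" 1 "\<bar>X\<bar>"] by (simp add: power2_eq_square)
  then have "\<bar>l\<bar> \<le> 2 * \<bar>X\<bar>" using lX by linarith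
  then have wabs: "\<bar>r * l\<bar> \<le> 2 * \<bar>r\<bar> * \<bar>X\<bar>"
    using mult_left_mono[of "\<bar>l\<bar>" "2 * \<bar>X\<bar>" "\<bar>r\<bar>"] by (simp add: abs_mult)
  have pw: "(1 + X) powr r = exp (r * l)" unfolding l_def using X(1) by (simp add: powr_def mult.commute)
  have "(r * l)^2 \<le> (2 * \<bar>r\<bar> * \<bar>X\<bar>)^2" using wabs by (metis abs_ge_zero power2_abs power_mono)
  moreover have "r * l \<le> 1" using wabs X(2) by linarith
  ultimately have e: "\<bar>exp (r * l) - 1 - r * l\<bar> \<le> 4 * r^2 * X^2"
    using abs_exp_minus_one_minus_le[of "r * l"] by (simp add: power_mult_distrib)
  have "\<bar>r * l - r * X\<bar> \<le> 2 * \<bar>r\<bar> * X^2"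
    using lX mult_left_mono[of "\<bar>l - X\<bar>" "2 * X^2" "\<bar>r\<bar>"] by (simp add: abs_mult right_diff_distrib[symmetric])
  moreover have "\<bar>exp (r * l) - 1 - r * X\<bar> \<le> \<bar>exp (r * l) - 1 - r * l\<bar> + \<bar>r * l - r * X\<bar>"
    using abs_triangle_ineq[of "exp (r * l) - 1 - r * l" "r * l - r * X"] by simp
  ultimately show ?thesis using e unfolding pw by (simp add: algebra_simps)
qed

lemma powr_one_plus_minus_linear_bigo:
  fixes X :: "'a \<Rightarrow> real"
  assumes "(X \<longlongrightarrow> 0) F"
  shows "(\<lambda>x. (1 + X x) powr r - 1 - r * X x) \<in> O[F](\<lambda>x. (X x)^2)"
proof (rule bigoI)
  have "eventually (\<lambda>x. \<bar>X x\<bar> < 1/(2 + 2 * \<bar>r\<bar>)) F"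
    using order_tendstoD(2)[OF tendsto_rabs[OF assms]] by (simp add: add_pos_nonneg)
  then show "eventually (\<lambda>x. norm ((1 + X x) powr r - 1 - r * X x) \<le> (4 * r^2 + 2 * \<bar>r\<bar>) * norm ((X x)^2)) F"
  proof eventually_elim
    case (elim x)
    then have "2 * \<bar>X x\<bar> + 2 * \<bar>r\<bar> * \<bar>X x\<bar> < 1"
      by (simp add: field_simps add_pos_nonneg)
    moreover have "0 \<le> \<bar>r\<bar> * \<bar>X x\<bar>" by simp
    ultimately have "\<bar>X x\<bar> \<le> 1/2" "2 * \<bar>r\<bar> * \<bar>X x\<bar> \<le> 1" by linarith+
    then show ?case using abs_powr_one_plus_minus_linear_le by simp
  qed
qed

lemma powr_one_plus_expansion:
  fixes X :: "nat \<Rightarrow> real" and \<kappa> r :: real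
  assumes "(\<lambda>d. X d - \<kappa> / real d) \<in> O(\<lambda>d. real d powr (-3/2))"
  shows "(\<lambda>d. (1 + X d) powr r - 1 - r * \<kappa> / real d) \<in> o(\<lambda>d. 1 / real d)"
proof -
  have pw: "(\<lambda>d. real d powr (-3/2)) \<in> o(\<lambda>d. 1 / real d)" by real_asymp
  have "(\<lambda>d. \<kappa> / real d) \<in> O(\<lambda>d. 1 / real d)"
    using cmult_in_bigo_iff[of \<kappa> "\<lambda>d. 1 / real d"] by simp
  moreover have "(\<lambda>d. X d - \<kappa> / real d) \<in> O(\<lambda>d. 1 / real d)"
    using landau_o.big_small_trans'[OF assms pw] .
  ultimately have X: "X \<in> O(\<lambda>d. 1 / real d)"
    using sum_in_bigo(1) by fastforce
  have "X \<in> o(\<lambda>_. 1)" by (rule landau_o.big_small_trans[OF X]) real_asymp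
  then have "X \<longlonglongrightarrow> 0" using smalloD_tendsto by fastforce
  have "(\<lambda>d. (1 + X d) powr r - 1 - r * X d) \<in> o(\<lambda>d. 1 / real d)"
  proof (rule landau_o.big_small_trans[OF powr_one_plus_minus_linear_bigo[OF \<open>X \<longlonglongrightarrow> 0\<close>]])
    have "(\<lambda>d. (X d)^2) \<in> O(\<lambda>d. (1 / real d)^2)" using X by (rule landau_o.big_power)
    moreover have "(\<lambda>d::nat. (1 / real d)^2) \<in> o(\<lambda>d. 1 / real d)" by real_asymp
    ultimately show "(\<lambda>d. (X d)^2) \<in> o(\<lambda>d. 1 / real d)" by (rule landau_o.big_small_trans)
  qed
  moreover have "(\<lambda>d. r * (X d - \<kappa> / real d)) \<in> o(\<lambda>d. 1 / real d)"
    using landau_o.big_small_trans[OF assms pw] by simp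
  ultimately have "(\<lambda>d. ((1 + X d) powr r - 1 - r * X d) + r * (X d - \<kappa> / real d)) \<in> o(\<lambda>d. 1 / real d)"
    by (rule sum_in_smallo)
  then show ?thesis by (simp add: algebra_simps)
qed

section \<open>Central moments of the binomial distribution\<close>

definition binom_weight :: "real \<Rightarrow> nat \<Rightarrow> nat \<Rightarrow> real" where
  "binom_weight p d n = real (d choose n) * p^n * (1 - p)^(d - n)"

definition falling_factorial :: "nat \<Rightarrow> nat \<Rightarrow> real" where
  "falling_factorial n j = (\<Prod>i<j. real n - real i)"

lemma falling_factorial_Suc_Suc: "falling_factorial (Suc n) (Suc j) = real (Suc n) * falling_factorial n j"
  unfolding falling_factorial_def prod.lessThan_Suc_shift by simp

lemma falling_factorial_0_Suc: "falling_factorial 0 (Suc j) = 0"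
  unfolding falling_factorial_def prod.lessThan_Suc_shift by simp

lemma binom_weight_nonneg: "0 \<le> p \<Longrightarrow> p \<le> 1 \<Longrightarrow> 0 \<le> binom_weight p d n"
  unfolding binom_weight_def by simp

lemma sum_binom_weight: "(\<Sum>n\<le>d. binom_weight p d n) = 1"
  using binomial_ring[of p "1 - p" d] by (simp add: binom_weight_def atLeast0AtMost mult.assoc)

lemma binom_weight_Suc_Suc:
  "binom_weight p (Suc e) (Suc n) * real (Suc n) = real (Suc e) * p * binom_weight p e n"
proof -
  have choose: "real (Suc n) * real (Suc e choose Suc n) = real (Suc e) * real (e choose n)"
    by (metis Suc_times_binomial of_nat_mult)
  have "binom_weight p (Suc e) (Suc n) * real (Suc n)
      = (real (Suc n) * real (Suc e choose Suc n)) * (p * p^n) * (1 - p)^(e - n)"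
    unfolding binom_weight_def by (simp only: diff_Suc_Suc power_Suc mult_ac)
  also have "\<dots> = real (Suc e) * p * binom_weight p e n"
    unfolding choose binom_weight_def by (simp only: mult_ac)
  finally show ?thesis .
qed

lemma binom_factorial_moment:
  "(\<Sum>n\<le>d. binom_weight p d n * falling_factorial n j) = falling_factorial d j * p^j"
proof (induction j arbitrary: d)
  case 0
  then show ?case using sum_binom_weight by (simp add: falling_factorial_def)
next
  case (Suc j)
  show ?case
  proof (cases d)
    case 0
    then show ?thesis by (simp add: falling_factorial_0_Suc)
  next
    case (Suc e)
    have "(\<Sum>n\<le>Suc e. binom_weight p (Suc e) n * falling_factorial n (Suc j))
        = (\<Sum>n\<le>e. binom_weight p (Suc e) (Suc n) * falling_factorial (Suc n) (Suc j))"
      by (subst sum.atMost_Suc_shift) (simp add: falling_factorial_0_Suc)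
    also have "\<dots> = (\<Sum>n\<le>e. real (Suc e) * p * (binom_weight p e n * falling_factorial n j))"
    proof (intro sum.cong refl)
      fix n
      have "binom_weight p (Suc e) (Suc n) * falling_factorial (Suc n) (Suc j)
          = (binom_weight p (Suc e) (Suc n) * real (Suc n)) * falling_factorial n j"
        by (simp only: falling_factorial_Suc_Suc mult.assoc)
      then show "binom_weight p (Suc e) (Suc n) * falling_factorial (Suc n) (Suc j)
          = real (Suc e) * p * (binom_weight p e n * falling_factorial n j)"
        by (simp only: binom_weight_Suc_Suc mult.assoc)
    qed
    also have "\<dots> = falling_factorial (Suc e) (Suc j) * p^(Suc j)"
      by (simp add: sum_distrib_left[symmetric] Suc.IH falling_factorial_Suc_Suc)
    finally show ?thesis using Suc by simp
  qed
qed

lemma falling_factorial_small: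
  "falling_factorial n 1 = real n" "falling_factorial n (Suc 0) = real n" "falling_factorial n 2 = real n * (real n - 1)"
  "falling_factorial n 3 = real n * (real n - 1) * (real n - 2)"
  "falling_factorial n 4 = real n * (real n - 1) * (real n - 2) * (real n - 3)"
  by (simp_all add: falling_factorial_def eval_nat_numeral lessThan_Suc algebra_simps)

lemma binom_mean: "(\<Sum>n\<le>d. binom_weight p d n * real n) = real d * p"
  using binom_factorial_moment[of p d 1] by (simp add: falling_factorial_small)

lemma binom_variance: "(\<Sum>n\<le>d. binom_weight p d n * (real n - real d * p)^2) = real d * p * (1 - p)"
proof -
  let ?m = "real d * p" and ?w = "binom_weight p d" and ?f = falling_factorial
  have "(\<Sum>n\<le>d. ?w n * (real n - ?m)^2)
      = (\<Sum>n\<le>d. ?w n * ?f n 2 + (1 - 2 * ?m) * (?w n * ?f n 1) + ?m^2 * ?w n)"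
    by (intro sum.cong refl) (simp add: falling_factorial_small power2_eq_square algebra_simps)
  also have "\<dots> = ?f d 2 * p^2 + (1 - 2 * ?m) * (?f d 1 * p) + ?m^2"
    by (simp add: sum.distrib sum_distrib_left[symmetric] binom_factorial_moment sum_binom_weight)
  also have "\<dots> = ?m * (1 - p)" by (simp add: falling_factorial_small power2_eq_square algebra_simps)
  finally show ?thesis .
qed

lemma binom_fourth_central_moment:
  "(\<Sum>n\<le>d. binom_weight p d n * (real n - real d * p)^4)
     = real d * (p * (1 - p)) + 3 * real d * (real d - 2) * (p * (1 - p))^2"
proof -
  let ?m = "real d * p" and ?w = "binom_weight p d" and ?f = falling_factorial
  have quartic: "(real n - ?m)^4 = ?f n 4 + (6 - 4 * ?m) * ?f n 3 + (7 - 12 * ?m + 6 * ?m^2) * ?f n 2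
      + (1 - 4 * ?m + 6 * ?m^2 - 4 * ?m^3) * ?f n 1 + ?m^4" for n
    unfolding falling_factorial_small by algebra
  have "(\<Sum>n\<le>d. ?w n * (real n - ?m)^4)
      = (\<Sum>n\<le>d. ?w n * ?f n 4 + (6 - 4 * ?m) * (?w n * ?f n 3) + (7 - 12 * ?m + 6 * ?m^2) * (?w n * ?f n 2)
          + (1 - 4 * ?m + 6 * ?m^2 - 4 * ?m^3) * (?w n * ?f n 1) + ?m^4 * ?w n)"
    by (intro sum.cong refl) (simp only: quartic, simp add: algebra_simps)
  also have "\<dots> = ?f d 4 * p^4 + (6 - 4 * ?m) * (?f d 3 * p^3) + (7 - 12 * ?m + 6 * ?m^2) * (?f d 2 * p^2)
      + (1 - 4 * ?m + 6 * ?m^2 - 4 * ?m^3) * (?f d 1 * p^1) + ?m^4"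
    by (simp add: sum.distrib sum_distrib_left[symmetric] binom_factorial_moment sum_binom_weight)
  also have "\<dots> = real d * (p * (1 - p)) + 3 * real d * (real d - 2) * (p * (1 - p))^2"
    by (simp add: falling_factorial_small) algebra
  finally show ?thesis .
qed

lemma binom_fourth_central_moment_le:
  assumes "0 \<le> p" "p \<le> 1"
  shows "(\<Sum>n\<le>d. binom_weight p d n * (real n - real d * p)^4) \<le> real d * p + 3 * (real d * p)^2"
proof -
  have pq: "0 \<le> p * (1 - p)" "p * (1 - p) \<le> p" using assms by (simp_all add: mult_left_le)
  then have "real d * (p * (1 - p)) \<le> real d * p" by (intro mult_left_mono) auto
  moreover have "real d * (real d - 2) * (p * (1 - p))^2 \<le> (real d * real d) * p^2"
  proof (rule mult_mono)
    show "real d * (real d - 2) \<le> real d * real d" by (simp add: mult_left_mono)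
    show "(p * (1 - p))^2 \<le> p^2" using pq by (intro power_mono) auto
  qed simp_all
  ultimately show ?thesis unfolding binom_fourth_central_moment by (simp add: power2_eq_square algebra_simps)
qed

definition rel_dev :: "real \<Rightarrow> nat \<Rightarrow> real" where
  "rel_dev \<mu> n = (real n - \<mu>) / \<mu>"

lemma binom_rel_dev_moments:
  assumes p: "0 < p" "p \<le> 1" and \<mu>: "real d * p \<ge> 1"
  shows "(\<Sum>n\<le>d. binom_weight p d n * rel_dev (real d * p) n) = 0"
    and "(\<Sum>n\<le>d. binom_weight p d n * (rel_dev (real d * p) n)^2) = (1 - p) / (real d * p)"
    and "(\<Sum>n\<le>d. binom_weight p d n * (rel_dev (real d * p) n)^4) \<le> 4 / (real d * p)^2"
proof -
  let ?\<mu> = "real d * p" and ?w = "binom_weight p d"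
  have "(\<Sum>n\<le>d. ?w n * rel_dev ?\<mu> n) = (\<Sum>n\<le>d. ?w n * real n - ?\<mu> * ?w n) / ?\<mu>"
    by (simp add: rel_dev_def sum_divide_distrib algebra_simps)
  also have "\<dots> = ((\<Sum>n\<le>d. ?w n * real n) - ?\<mu> * (\<Sum>n\<le>d. ?w n)) / ?\<mu>"
    by (simp add: sum_subtractf sum_distrib_left)
  finally show "(\<Sum>n\<le>d. ?w n * rel_dev ?\<mu> n) = 0" by (simp add: binom_mean sum_binom_weight)
  have "(\<Sum>n\<le>d. ?w n * (rel_dev ?\<mu> n)^2) = (\<Sum>n\<le>d. ?w n * (real n - ?\<mu>)^2) / ?\<mu>^2"
    by (simp add: rel_dev_def sum_divide_distrib power_divide)
  also have "\<dots> = ?\<mu> * (1 - p) / ?\<mu>^2" by (simp only: binom_variance)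
  finally show "(\<Sum>n\<le>d. ?w n * (rel_dev ?\<mu> n)^2) = (1 - p) / ?\<mu>"
    using \<mu> by (simp add: power2_eq_square)
  have "(\<Sum>n\<le>d. ?w n * (rel_dev ?\<mu> n)^4) = (\<Sum>n\<le>d. ?w n * (real n - ?\<mu>)^4) / ?\<mu>^4"
    by (simp add: rel_dev_def sum_divide_distrib power_divide)
  also have "\<dots> \<le> (?\<mu> + 3 * ?\<mu>^2) / ?\<mu>^4"
    using binom_fourth_central_moment_le[of p d] p by (intro divide_right_mono) auto
  also have "\<dots> \<le> (4 * ?\<mu>^2) / ?\<mu>^4"
    using mult_left_mono[OF \<mu>, of ?\<mu>] \<mu> by (intro divide_right_mono) (simp_all add: power2_eq_square mult_ac)
  also have "\<dots> = 4 / ?\<mu>^2" using \<mu> by (simp add: field_simps eval_nat_numeral)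
  finally show "(\<Sum>n\<le>d. ?w n * (rel_dev ?\<mu> n)^4) \<le> 4 / ?\<mu>^2" .
qed

lemma binom_expect_rel_dev_poly_le:
  assumes p: "0 < p" "p \<le> 1" and \<mu>: "real d * p \<ge> 1" and "\<beta> \<ge> 0" "\<gamma> \<ge> 0"
  shows "(\<Sum>n\<le>d. binom_weight p d n * (\<alpha> + \<beta> * (rel_dev (real d * p) n)^2 + \<gamma> * (rel_dev (real d * p) n)^4))
    \<le> \<alpha> + \<beta> / (real d * p) + \<gamma> * (4 / (real d * p)^2)"
proof -
  let ?\<mu> = "real d * p" and ?w = "binom_weight p d" and ?t = "rel_dev (real d * p)"
  have "(\<Sum>n\<le>d. ?w n * (\<alpha> + \<beta> * (?t n)^2 + \<gamma> * (?t n)^4))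
      = \<alpha> * (\<Sum>n\<le>d. ?w n) + \<beta> * (\<Sum>n\<le>d. ?w n * (?t n)^2) + \<gamma> * (\<Sum>n\<le>d. ?w n * (?t n)^4)"
    by (simp add: sum_distrib_left sum.distrib algebra_simps)
  also have "\<dots> \<le> \<alpha> + \<beta> * (1 / ?\<mu>) + \<gamma> * (4 / ?\<mu>^2)"
    using binom_rel_dev_moments[OF p \<mu>] assms
    by (intro add_mono mult_left_mono) (auto simp: sum_binom_weight intro: divide_right_mono)
  finally show ?thesis by simp
qed

section \<open>The ratio \<open>\<Gamma>(n/2 + a) / \<Gamma>(n/2)\<close> near \<open>n = \<mu>\<close>\<close>

definition half_gamma_ratio :: "real \<Rightarrow> nat \<Rightarrow> real" where
  "half_gamma_ratio a n = Gamma (real n / 2 + a) / Gamma (real n / 2)"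

definition half_gamma_ratio_taylor :: "real \<Rightarrow> real \<Rightarrow> nat \<Rightarrow> real" where
  "half_gamma_ratio_taylor a \<mu> n = 2 powr (-a) * \<mu> powr a *
     (1 + a * rel_dev \<mu> n + a * (a - 1) / 2 * (rel_dev \<mu> n)^2 + a * (a - 1) / \<mu>)"

lemma half_gamma_ratio_approx:
  fixes a :: real assumes "0 < a" "a \<le> 1" "n \<ge> 4"
  shows "\<bar>half_gamma_ratio a n - (real n / 2) powr a * (1 + a * (a - 1) / real n)\<bar> \<le> 4 * (real n / 2) powr (a - 2)"
  using Gamma_ratio_approx[of a "real n / 2"] assms by (simp add: half_gamma_ratio_def)

lemma half_gamma_ratio_bounded:
  fixes a :: real assumes a: "0 < a" "a \<le> 1"
  obtains C where "C \<ge> 0" "\<And>n. \<bar>half_gamma_ratio a n\<bar> \<le> (real n / 2) powr a + C"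
proof
  define C where "C = 4 + (\<Sum>n<4. \<bar>half_gamma_ratio a n\<bar>)"
  show "C \<ge> 0" by (simp add: C_def sum_nonneg)
  show "\<bar>half_gamma_ratio a n\<bar> \<le> (real n / 2) powr a + C" for n
  proof (cases "n \<ge> 4")
    case True
    define x where "x = real n / 2"
    have x: "x \<ge> 2" using True by (simp add: x_def)
    have "-1/4 \<le> a * (a - 1)" "a * (a - 1) \<le> 0"
      using a mult_one_minus_le_quarter[of a] by (simp_all add: mult_nonneg_nonpos algebra_simps)
    then have c: "0 \<le> 1 + a * (a - 1) / real n" "1 + a * (a - 1) / real n \<le> 1"
      using True by (simp_all add: field_simps divide_nonpos_nonneg)
    have "x powr (a - 2) \<le> x powr 0" using x a by (intro powr_mono) auto
    then have rem: "4 * x powr (a - 2) \<le> 4" using x by simp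
    define v where "v = x powr a * (1 + a * (a - 1) / real n)"
    have "\<bar>v\<bar> \<le> x powr a" using c by (simp add: v_def abs_mult mult_left_le)
    moreover have "\<bar>half_gamma_ratio a n\<bar> \<le> \<bar>v\<bar> + 4 * x powr (a - 2)"
      using half_gamma_ratio_approx[OF a True, folded x_def, folded v_def]
        abs_triangle_ineq2[of "half_gamma_ratio a n" v] by linarith
    moreover have "0 \<le> (\<Sum>n<4. \<bar>half_gamma_ratio a n\<bar>)" by (simp add: sum_nonneg)
    ultimately show ?thesis unfolding C_def x_def[symmetric] using rem by linarith
  next
    case False
    then have "\<bar>half_gamma_ratio a n\<bar> \<le> (\<Sum>n<4. \<bar>half_gamma_ratio a n\<bar>)"
      by (intro member_le_sum) auto
    then show ?thesis by (simp add: C_def add_increasing)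
  qed
qed

lemma abs_half_powr_minus_taylor_le:
  fixes a \<mu> :: real assumes a: "0 < a" "a \<le> 1" and \<mu>: "\<mu> > 0" and n: "real n \<ge> \<mu> / 2"
  shows "\<bar>(real n / 2) powr a * (1 + a * (a - 1) / real n) - half_gamma_ratio_taylor a \<mu> n\<bar>
    \<le> \<mu> powr a * (\<bar>rel_dev \<mu> n\<bar>^3 + 2 * \<bar>rel_dev \<mu> n\<bar> / \<mu>)"
proof -
  define t where "t = rel_dev \<mu> n"
  define Q where "Q = (2::real) powr (-a)"
  define c where "c = a * (a - 1)"
  have nt: "real n = \<mu> * (1 + t)" using \<mu> by (simp add: t_def rel_dev_def field_simps)
  have t: "t \<ge> -1/2" using n \<mu> by (simp add: t_def rel_dev_def field_simps)
  have Q: "0 < Q" "Q \<le> 1" using a by (simp_all add: Q_def powr_minus_divide ge_one_powr_ge_zero)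
  have pw: "(real n / 2) powr a = Q * \<mu> powr a * (1 + t) powr a"
    using \<mu> t by (simp add: nt Q_def powr_divide powr_mult powr_minus_divide)
  have split: "(1 + t) powr a = (1 + t) powr (a - 1) * (1 + t)"
    using powr_add[of "1 + t" "a - 1" 1] t by simp
  have lin: "(real n / 2) powr a * (c / real n) = Q * \<mu> powr a * (c / \<mu> * (1 + t) powr (a - 1))"
  proof -
    have "0 < \<mu> * (1 + t)" using \<mu> t by simp
    then have "0 < \<mu> + \<mu> * t" by (simp add: algebra_simps)
    then show ?thesis using \<mu> by (simp only: pw) (simp add: nt split field_simps)
  qed
  define R1 where "R1 = (1 + t) powr a - 1 - a * t - c / 2 * t^2"
  define R2 where "R2 = c / \<mu> * ((1 + t) powr (a - 1) - 1)"
  have "(real n / 2) powr a * (1 + c / real n) - half_gamma_ratio_taylor a \<mu> n = Q * \<mu> powr a * (R1 + R2)"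
    using lin unfolding distrib_left R1_def R2_def
    by (simp add: pw half_gamma_ratio_taylor_def t_def[symmetric] Q_def[symmetric] c_def algebra_simps)
  moreover have "\<bar>R1\<bar> \<le> \<bar>t\<bar>^3"
    using abs_one_plus_powr_taylor2_le[OF a t] by (simp add: R1_def c_def)
  moreover have "\<bar>R2\<bar> \<le> 2 * \<bar>t\<bar> / \<mu>"
  proof -
    have "\<bar>c\<bar> \<le> 1" using a mult_one_minus_le_quarter[of a] by (simp add: c_def abs_mult algebra_simps)
    moreover have "\<bar>(1 + t) powr (a - 1) - 1\<bar> \<le> 2 * \<bar>t\<bar>"
      using abs_powr_minus_one_le[of "a - 1" "1 + t"] a t by simp
    ultimately have "\<bar>c\<bar> * \<bar>(1 + t) powr (a - 1) - 1\<bar> \<le> 1 * (2 * \<bar>t\<bar>)"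
      by (intro mult_mono) auto
    then show ?thesis using \<mu> by (simp add: R2_def abs_mult divide_right_mono)
  qed
  ultimately have "\<bar>(real n / 2) powr a * (1 + c / real n) - half_gamma_ratio_taylor a \<mu> n\<bar>
      \<le> Q * \<mu> powr a * (\<bar>t\<bar>^3 + 2 * \<bar>t\<bar> / \<mu>)"
    using Q abs_triangle_ineq[of R1 R2] by (simp add: abs_mult mult_left_mono)
  also have "\<dots> \<le> 1 * \<mu> powr a * (\<bar>t\<bar>^3 + 2 * \<bar>t\<bar> / \<mu>)"
    using Q \<mu> by (intro mult_right_mono) auto
  finally show ?thesis by (simp add: t_def c_def)
qed

lemma abs_half_gamma_ratio_minus_powr_le:
  fixes a \<mu> :: real assumes a: "0 < a" "a \<le> 1" and \<mu>: "\<mu> \<ge> 16" and n: "real n \<ge> \<mu> / 2"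
  shows "\<bar>half_gamma_ratio a n - (real n / 2) powr a * (1 + a * (a - 1) / real n)\<bar> \<le> \<mu> powr a * (64 / \<mu>^2)"
proof -
  have "(real n / 2) powr (a - 2) \<le> (\<mu> / 4) powr (a - 2)"
    using a \<mu> n by (intro powr_mono2') auto
  also have "\<dots> = 4 powr (2 - a) * (\<mu> powr a / \<mu>^2)"
    using \<mu> by (simp add: powr_divide powr_diff powr_minus_divide[symmetric])
  also have "\<dots> \<le> 4 powr 2 * (\<mu> powr a / \<mu>^2)"
    using a by (intro mult_right_mono powr_mono) auto
  finally have "4 * (real n / 2) powr (a - 2) \<le> 4 * (4 powr 2 * (\<mu> powr a / \<mu>^2))" by simp
  also have "\<dots> = \<mu> powr a * (64 / \<mu>^2)" by simp
  finally have "4 * (real n / 2) powr (a - 2) \<le> \<mu> powr a * (64 / \<mu>^2)" .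
  moreover have "n \<ge> 4" using \<mu> n by linarith
  ultimately show ?thesis using half_gamma_ratio_approx[OF a] by (meson order_trans)
qed

(* Below mu/2 we have t < -1/2, so 16 t^4 >= 1 absorbs both terms, each of size O(mu^a). *)
lemma abs_half_gamma_ratio_minus_taylor_far:
  fixes a \<mu> C :: real assumes a: "0 < a" "a \<le> 1" and \<mu>: "\<mu> \<ge> 16" and n: "real n < \<mu> / 2"
    and C: "C \<ge> 0" "\<And>n. \<bar>half_gamma_ratio a n\<bar> \<le> (real n / 2) powr a + C"
  shows "\<bar>half_gamma_ratio a n - half_gamma_ratio_taylor a \<mu> n\<bar> \<le> \<mu> powr a * (16 * (5 + C) * (rel_dev \<mu> n)^4)"
proof -
  define t where "t = rel_dev \<mu> n"
  define M where "M = \<mu> powr a"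
  define c where "c = a * (a - 1)"
  have M: "M \<ge> 1" using \<mu> a by (simp add: M_def ge_one_powr_ge_zero)
  have t: "-1 \<le> t" "t < -1/2" using n \<mu> by (simp_all add: t_def rel_dev_def field_simps)
  then have "(1/2)^4 \<le> \<bar>t\<bar>^4" by (intro power_mono) auto
  then have t4: "1 \<le> 16 * t^4" by (simp add: power_even_abs power_divide)
  have "(real n / 2) powr a \<le> M" using n \<mu> a by (simp add: M_def powr_mono2)
  moreover have "C \<le> C * M" using C M by (simp add: mult_le_cancel_left1)
  ultimately have Gr: "\<bar>half_gamma_ratio a n\<bar> \<le> M + C * M" using C(2)[of n] by linarith
  have c: "\<bar>c\<bar> \<le> 1/4" using a mult_one_minus_le_quarter[of a] by (simp add: c_def abs_mult algebra_simps)
  have at: "\<bar>a * t\<bar> \<le> 1" unfolding abs_mult using a t by (intro mult_le_one) auto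
  have "t^2 \<le> 1" using t by (simp add: abs_square_le_1)
  with c have "\<bar>c\<bar> * t^2 \<le> 1/4 * 1" by (intro mult_mono) auto
  moreover have "\<bar>c / \<mu>\<bar> \<le> 1" using c \<mu> by (simp add: field_simps)
  ultimately have "\<bar>c / 2 * t^2\<bar> \<le> 1" "\<bar>c / \<mu>\<bar> \<le> 1" by (simp_all add: abs_mult)
  then have "\<bar>1 + a * t + c / 2 * t^2 + c / \<mu>\<bar> \<le> 4" using at by linarith
  moreover have "0 < 2 powr (-a)" "2 powr (-a) \<le> (1::real)"
    using a by (simp_all add: powr_minus_divide ge_one_powr_ge_zero)
  ultimately have taylor: "\<bar>half_gamma_ratio_taylor a \<mu> n\<bar> \<le> 1 * M * 4"
    unfolding half_gamma_ratio_taylor_def t_def[symmetric] M_def[symmetric] c_def[symmetric] abs_mult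
    using M by (intro mult_mono) auto
  have "(5 + C) * M \<le> (5 + C) * (16 * t^4) * M" using t4 C M by (simp add: mult_le_cancel_left1)
  with Gr taylor abs_triangle_ineq4[of "half_gamma_ratio a n" "half_gamma_ratio_taylor a \<mu> n"]
  show ?thesis by (simp add: M_def[symmetric] t_def[symmetric] algebra_simps)
qed

lemma abs_half_gamma_ratio_minus_taylor_le:
  fixes a \<mu> C :: real assumes a: "0 < a" "a \<le> 1" and \<mu>: "\<mu> \<ge> 16"
    and C: "C \<ge> 0" "\<And>n. \<bar>half_gamma_ratio a n\<bar> \<le> (real n / 2) powr a + C"
  shows "\<bar>half_gamma_ratio a n - half_gamma_ratio_taylor a \<mu> n\<bar> \<le> \<mu> powr a *
    (64 / \<mu>^2 + \<bar>rel_dev \<mu> n\<bar>^3 + 2 * \<bar>rel_dev \<mu> n\<bar> / \<mu> + 16 * (5 + C) * (rel_dev \<mu> n)^4)"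
proof (cases "real n \<ge> \<mu> / 2")
  case True
  let ?v = "(real n / 2) powr a * (1 + a * (a - 1) / real n)"
  have "\<bar>half_gamma_ratio a n - half_gamma_ratio_taylor a \<mu> n\<bar>
      \<le> \<bar>half_gamma_ratio a n - ?v\<bar> + \<bar>?v - half_gamma_ratio_taylor a \<mu> n\<bar>"
    using abs_triangle_ineq[of "half_gamma_ratio a n - ?v" "?v - half_gamma_ratio_taylor a \<mu> n"] by simp
  moreover have "0 \<le> \<mu> powr a * (16 * (5 + C) * (rel_dev \<mu> n)^4)" using C by simp
  moreover have "\<mu> > 0" using \<mu> by simp
  ultimately show ?thesis
    using abs_half_gamma_ratio_minus_powr_le[OF a \<mu> True] abs_half_powr_minus_taylor_le[OF a \<open>\<mu> > 0\<close> True]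
    by (simp only: distrib_left[of "\<mu> powr a"])
next
  case False
  then have "real n < \<mu> / 2" by simp
  note far = abs_half_gamma_ratio_minus_taylor_far[OF a \<mu> this C]
  have "0 \<le> \<mu> powr a * (64 / \<mu>^2 + \<bar>rel_dev \<mu> n\<bar>^3 + 2 * \<bar>rel_dev \<mu> n\<bar> / \<mu>)" using \<mu> by simp
  with far show ?thesis by (simp only: distrib_left[of "\<mu> powr a"])
qed

section \<open>The binomial mean of \<open>\<Gamma>(n/2 + a) / \<Gamma>(n/2)\<close>\<close>

lemma half_gamma_ratio_nonneg: "0 < a \<Longrightarrow> 0 \<le> half_gamma_ratio a n"
  by (cases "n = 0") (simp_all add: half_gamma_ratio_def less_imp_le)

lemma binom_expect_half_gamma_ratio_pos:
  assumes "0 < a" "0 < p" "p < 1" "d > 0"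
  shows "0 < (\<Sum>n\<le>d. binom_weight p d n * half_gamma_ratio a n)"
proof (rule sum_pos2)
  show "0 < binom_weight p d d * half_gamma_ratio a d"
    using assms by (simp add: binom_weight_def half_gamma_ratio_def)
  show "0 \<le> binom_weight p d n * half_gamma_ratio a n" for n
    using assms by (simp add: binom_weight_nonneg half_gamma_ratio_nonneg)
qed auto

lemma binom_expect_half_gamma_ratio_taylor:
  assumes p: "0 < p" "p \<le> 1" and \<mu>: "real d * p \<ge> 1"
  shows "(\<Sum>n\<le>d. binom_weight p d n * half_gamma_ratio_taylor a (real d * p) n)
    = 2 powr (-a) * (real d * p) powr a * (1 + a * (a - 1) * (3 - p) / (2 * (real d * p)))"
proof -
  let ?\<mu> = "real d * p" and ?w = "binom_weight p d" and ?t = "rel_dev (real d * p)"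
  let ?Q = "2 powr (-a) * ?\<mu> powr a" and ?c = "a * (a - 1)"
  have "(\<Sum>n\<le>d. ?w n * half_gamma_ratio_taylor a ?\<mu> n)
      = (\<Sum>n\<le>d. ?Q * (1 + ?c / ?\<mu>) * ?w n + ?Q * a * (?w n * ?t n) + ?Q * ?c / 2 * (?w n * (?t n)^2))"
    by (intro sum.cong refl) (simp add: half_gamma_ratio_taylor_def algebra_simps)
  also have "\<dots> = ?Q * ((1 + ?c / ?\<mu>) * (\<Sum>n\<le>d. ?w n) + a * (\<Sum>n\<le>d. ?w n * ?t n) + ?c / 2 * (\<Sum>n\<le>d. ?w n * (?t n)^2))"
    by (simp only: sum.distrib sum_distrib_left[symmetric]) (simp add: algebra_simps)
  also have "\<dots> = ?Q * (1 + ?c * (3 - p) / (2 * ?\<mu>))"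
  proof -
    have "real d * p > 0" using \<mu> by simp
    then have "p \<noteq> 0" "real d \<noteq> 0" by (auto simp: zero_less_mult_iff)
    then show ?thesis unfolding sum_binom_weight binom_rel_dev_moments(1,2)[OF p \<mu>]
      by (simp add: field_simps)
  qed
  finally show ?thesis .
qed

(* With s = sqrt mu, the bounds |t| <= 1/s + s t^2 and |t|^3 <= t^2/s + s t^4 leave only even
   powers of t, whose binomial means are O(1/mu) and O(1/mu^2). *)
lemma abs_half_gamma_ratio_minus_taylor_le_moments:
  fixes a \<mu> C :: real assumes a: "0 < a" "a \<le> 1" and \<mu>: "\<mu> \<ge> 16"
    and C: "C \<ge> 0" "\<And>n. \<bar>half_gamma_ratio a n\<bar> \<le> (real n / 2) powr a + C"
  shows "\<bar>half_gamma_ratio a n - half_gamma_ratio_taylor a \<mu> n\<bar> \<le> \<mu> powr a *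
    ((64 / \<mu>^2 + 2 / (sqrt \<mu> * \<mu>)) + (1 / sqrt \<mu> + 2 * sqrt \<mu> / \<mu>) * (rel_dev \<mu> n)^2
      + (sqrt \<mu> + 16 * (5 + C)) * (rel_dev \<mu> n)^4)"
proof -
  define s where "s = sqrt \<mu>"
  define t where "t = rel_dev \<mu> n"
  have s: "s > 0" using \<mu> by (simp add: s_def)
  have lin: "\<bar>t\<bar> \<le> 1/s + s * t^2" using abs_le_inverse_plus_square[OF s] .
  have "\<bar>t\<bar>^3 = t^2 * \<bar>t\<bar>" by (simp add: power2_eq_square power3_eq_cube)
  also have "\<dots> \<le> t^2 * (1/s + s * t^2)" using lin by (intro mult_left_mono) auto
  also have "\<dots> = (1/s) * t^2 + s * t^4" by (simp add: algebra_simps power2_eq_square power4_eq_xxxx)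
  finally have cube: "\<bar>t\<bar>^3 \<le> (1/s) * t^2 + s * t^4" .
  have "2 * \<bar>t\<bar> / \<mu> \<le> 2 * (1/s + s * t^2) / \<mu>" using lin \<mu> by (intro divide_right_mono) auto
  also have "\<dots> = 2 / (s * \<mu>) + (2 * s / \<mu>) * t^2" using s \<mu> by (simp add: field_simps)
  finally have "64 / \<mu>^2 + \<bar>t\<bar>^3 + 2 * \<bar>t\<bar> / \<mu> + 16 * (5 + C) * t^4
      \<le> (64 / \<mu>^2 + 2 / (s * \<mu>)) + (1 / s + 2 * s / \<mu>) * t^2 + (s + 16 * (5 + C)) * t^4"
    using cube unfolding distrib_right by linarith
  then show ?thesis
    using abs_half_gamma_ratio_minus_taylor_le[OF a \<mu> C, of n] mult_left_mono[of _ _ "\<mu> powr a"]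
    unfolding s_def t_def by (meson order_trans powr_ge_zero)
qed

lemma moment_bound_arith:
  fixes \<mu> K :: real assumes \<mu>: "\<mu> \<ge> 16" and K: "K \<ge> 0"
  shows "(64 / \<mu>^2 + 2 / (sqrt \<mu> * \<mu>)) + (1 / sqrt \<mu> + 2 * sqrt \<mu> / \<mu>) / \<mu> + (sqrt \<mu> + K) * (4 / \<mu>^2)
    \<le> (73 + 4 * K) / (\<mu> * sqrt \<mu>)"
proof -
  define s where "s = sqrt \<mu>"
  define u where "u = 1 / (\<mu> * s)"
  have s: "s * s = \<mu>" "s \<ge> 4" using \<mu> real_sqrt_le_mono[of 16 \<mu>] by (simp_all add: s_def)
  have "s * 1 \<le> s * s" using s by (intro mult_left_mono) auto
  then have "1 / \<mu>^2 \<le> u" using s \<mu> by (simp add: u_def power2_eq_square frac_le)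
  then have "64 * (1 / \<mu>^2) + 4 * K * (1 / \<mu>^2) \<le> 64 * u + 4 * K * u"
    using K by (intro add_mono mult_left_mono) auto
  moreover have "(64 / \<mu>^2 + 2 / (s * \<mu>)) + (1 / s + 2 * s / \<mu>) / \<mu> + (s + K) * (4 / \<mu>^2)
      = 64 * (1 / \<mu>^2) + 4 * K * (1 / \<mu>^2) + 9 * u"
    using s \<mu> by (simp add: u_def field_simps power2_eq_square flip: s(1))
  ultimately show ?thesis by (simp add: s_def[symmetric] u_def add_divide_distrib)
qed

lemma binom_expect_half_gamma_ratio:
  fixes a p :: real assumes a: "0 < a" "a \<le> 1" and p: "0 < p" "p \<le> 1"
  obtains K where "\<And>d. 16 \<le> real d * p \<Longrightarrow>
    \<bar>(\<Sum>n\<le>d. binom_weight p d n * half_gamma_ratio a n)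
       - 2 powr (-a) * (real d * p) powr a * (1 + a * (a - 1) * (3 - p) / (2 * (real d * p)))\<bar>
    \<le> K * (real d * p) powr a / (real d * p * sqrt (real d * p))"
proof -
  obtain C where C: "C \<ge> 0" "\<And>n. \<bar>half_gamma_ratio a n\<bar> \<le> (real n / 2) powr a + C"
    using half_gamma_ratio_bounded[OF a] by blast
  show ?thesis
  proof (rule that)
    fix d assume \<mu>16: "16 \<le> real d * p"
    define \<mu> where "\<mu> = real d * p"
    define M where "M = \<mu> powr a"
    define \<alpha> where "\<alpha> = 64 / \<mu>^2 + 2 / (sqrt \<mu> * \<mu>)"
    define \<beta> where "\<beta> = 1 / sqrt \<mu> + 2 * sqrt \<mu> / \<mu>"
    define \<gamma> where "\<gamma> = sqrt \<mu> + 16 * (5 + C)"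
    let ?w = "binom_weight p d" and ?t = "rel_dev \<mu>"
    have \<mu>: "\<mu> \<ge> 16" using \<mu>16 by (simp add: \<mu>_def)
    have "\<bar>(\<Sum>n\<le>d. ?w n * half_gamma_ratio a n) - (\<Sum>n\<le>d. ?w n * half_gamma_ratio_taylor a \<mu> n)\<bar>
        \<le> (\<Sum>n\<le>d. ?w n * (M * (\<alpha> + \<beta> * (?t n)^2 + \<gamma> * (?t n)^4)))"
      unfolding sum_subtractf[symmetric] right_diff_distrib[symmetric] M_def \<alpha>_def \<beta>_def \<gamma>_def
      using p abs_half_gamma_ratio_minus_taylor_le_moments[OF a \<mu> C]
      by (intro order_trans[OF sum_abs sum_mono]) (simp add: abs_mult binom_weight_nonneg mult_left_mono)
    also have "\<dots> = M * (\<Sum>n\<le>d. ?w n * (\<alpha> + \<beta> * (?t n)^2 + \<gamma> * (?t n)^4))"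
      by (simp add: sum_distrib_left algebra_simps)
    also have "\<dots> \<le> M * (\<alpha> + \<beta> / \<mu> + \<gamma> * (4 / \<mu>^2))"
      using binom_expect_rel_dev_poly_le[OF p, of d \<beta> \<gamma> \<alpha>] \<mu>16 \<mu> C
      by (intro mult_left_mono) (simp_all add: \<mu>_def \<beta>_def \<gamma>_def M_def)
    also have "\<dots> \<le> M * ((73 + 4 * (16 * (5 + C))) / (\<mu> * sqrt \<mu>))"
      using moment_bound_arith[OF \<mu>, of "16 * (5 + C)"] C
      by (intro mult_left_mono) (simp_all add: \<alpha>_def \<beta>_def \<gamma>_def M_def)
    finally show "\<bar>(\<Sum>n\<le>d. ?w n * half_gamma_ratio a n)
         - 2 powr (-a) * (real d * p) powr a * (1 + a * (a - 1) * (3 - p) / (2 * (real d * p)))\<bar>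
      \<le> (73 + 4 * (16 * (5 + C))) * (real d * p) powr a / (real d * p * sqrt (real d * p))"
      using binom_expect_half_gamma_ratio_taylor[OF p, of d a] \<mu>16 unfolding \<mu>_def M_def by (simp add: mult_ac)
  qed
qed

lemma binom_expect_half_gamma_ratio_relative_expansion:
  fixes a p :: real assumes a: "0 < a" "a \<le> 1" and p: "0 < p" "p \<le> 1"
  shows "(\<lambda>d. (\<Sum>n\<le>d. binom_weight p d n * half_gamma_ratio a n) / (2 powr (-a) * (real d * p) powr a) - 1
           - a * (a - 1) * (3 - p) / (2 * p) / real d) \<in> O(\<lambda>d. real d powr (-3/2))"
proof -
  obtain K where K: "\<And>d. 16 \<le> real d * p \<Longrightarrow>
    \<bar>(\<Sum>n\<le>d. binom_weight p d n * half_gamma_ratio a n)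
       - 2 powr (-a) * (real d * p) powr a * (1 + a * (a - 1) * (3 - p) / (2 * (real d * p)))\<bar>
    \<le> K * (real d * p) powr a / (real d * p * sqrt (real d * p))"
    using binom_expect_half_gamma_ratio[OF a p] by blast
  show ?thesis
  proof (rule bigoI)
    have "eventually (\<lambda>d. 16 / p \<le> real d) sequentially"
      using filterlim_real_sequentially by (simp add: filterlim_at_top)
    then show "eventually (\<lambda>d. norm ((\<Sum>n\<le>d. binom_weight p d n * half_gamma_ratio a n) / (2 powr (-a) * (real d * p) powr a) - 1
        - a * (a - 1) * (3 - p) / (2 * p) / real d) \<le> K / (2 powr (-a) * p powr (3/2)) * norm (real d powr (-3/2))) sequentially"
    proof eventually_elim
      case (elim d)
      define \<mu> where "\<mu> = real d * p"
      define Q where "Q = (2::real) powr (-a)"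
      define S where "S = (\<Sum>n\<le>d. binom_weight p d n * half_gamma_ratio a n)"
      have \<mu>: "16 \<le> \<mu>" using elim p by (simp add: \<mu>_def field_simps)
      have pos: "0 < Q * \<mu> powr a" using \<mu> by (simp add: Q_def)
      have \<kappa>: "a * (a - 1) * (3 - p) / (2 * p) / real d = a * (a - 1) * (3 - p) / (2 * \<mu>)"
        by (simp add: \<mu>_def mult_ac)
      define E where "E = S - Q * \<mu> powr a * (1 + a * (a - 1) * (3 - p) / (2 * \<mu>))"
      have nz: "Q \<noteq> 0" "\<mu> powr a \<noteq> 0" "\<mu> \<noteq> 0" using \<mu> by (simp_all add: Q_def)
      have "S / (Q * \<mu> powr a) - 1 - a * (a - 1) * (3 - p) / (2 * p) / real d = E / (Q * \<mu> powr a)"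
        unfolding \<kappa> E_def using nz by (simp add: field_simps)
      then have "norm (S / (Q * \<mu> powr a) - 1 - a * (a - 1) * (3 - p) / (2 * p) / real d) = \<bar>E\<bar> / (Q * \<mu> powr a)"
        using pos by simp
      also have "\<dots> \<le> (K * \<mu> powr a / (\<mu> * sqrt \<mu>)) / (Q * \<mu> powr a)"
        using K[of d] \<mu> pos by (intro divide_right_mono) (simp_all add: \<mu>_def Q_def S_def E_def)
      also have "\<mu> * sqrt \<mu> = p powr (3/2) * real d powr (3/2)"
      proof -
        have "\<mu> * sqrt \<mu> = \<mu> powr (3/2)" using \<mu> by (simp add: powr_half_sqrt[symmetric] powr_mult_base)
        then show ?thesis using p by (simp add: \<mu>_def powr_mult mult.commute)
      qed
      also have "K * \<mu> powr a / (p powr (3/2) * real d powr (3/2)) / (Q * \<mu> powr a)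
          = K / (Q * p powr (3/2)) * norm (real d powr (-3/2))"
        using nz by (simp add: powr_minus_divide)
      finally show ?case by (simp add: S_def \<mu>_def Q_def)
    qed
  qed
qed

(* The n = 0 term may be added because Gamma 0 = 0 in HOL, so half_gamma_ratio a 0 = 0. *)
lemma I0_eq_binom_expect:
  "I0 q s d = q powr (-s) * 2 powr (s/2) * (\<Sum>n\<le>d. binom_weight (q/2) d n * half_gamma_ratio (s/2) n)"
proof -
  have "half_gamma_ratio (s/2) 0 = 0" by (simp add: half_gamma_ratio_def)
  then have "(\<Sum>n\<le>d. binom_weight (q/2) d n * half_gamma_ratio (s/2) n)
      = (\<Sum>n=1..d. binom_weight (q/2) d n * half_gamma_ratio (s/2) n)"
    by (simp add: atMost_atLeast0 sum.atLeast_Suc_atMost)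
  also have "\<dots> = (\<Sum>n=1..d. qd q d n * Gamma (real n / 2 + s/2) / Gamma (real n / 2))"
    by (simp add: qd_def binom_weight_def half_gamma_ratio_def)
  finally show ?thesis by (simp add: I0_def)
qed

lemma sigma_bar_sq_eq:
  assumes q: "0 < q" "q \<le> 1" and s: "0 < s" and d: "d > 0"
  shows "(sigma_bar q s d)^2 = 2 * q / real d *
    ((\<Sum>n\<le>d. binom_weight (q/2) d n * half_gamma_ratio (s/2) n) / (2 powr (-(s/2)) * (real d * (q/2)) powr (s/2)))
      powr (-2/s)"
proof -
  define Y where "Y = (\<Sum>n\<le>d. binom_weight (q/2) d n * half_gamma_ratio (s/2) n) / (2 powr (-(s/2)) * (real d * (q/2)) powr (s/2))"
  have Y: "Y > 0"
    using binom_expect_half_gamma_ratio_pos[of "s/2" "q/2" d] q s d by (simp add: Y_def)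
  have "q powr s * (real d / (2 * q)) powr (s/2) = (q^2) powr (s/2) * (real d / (2 * q)) powr (s/2)"
    using q by (simp add: powr_powr flip: powr_numeral)
  also have "\<dots> = (q^2 * (real d / (2 * q))) powr (s/2)"
    using q by (intro powr_mult[symmetric])
  also have "q^2 * (real d / (2 * q)) = real d * (q/2)"
    using q by (simp add: power2_eq_square)
  finally have "(real d * (q/2)) powr (s/2) = q powr s * (real d / (2 * q)) powr (s/2)" ..
  then have I0: "I0 q s d = (real d / (2 * q)) powr (s/2) * Y"
    using q d by (simp add: I0_eq_binom_expect Y_def powr_minus_divide powr_divide field_simps)
  then have "I0 q s d > 0" using Y q d by simp
  then have "(sigma_bar q s d)^2 = I0 q s d powr (-2/s)"
    by (simp add: sigma_bar_def power2_eq_square powr_add[symmetric])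
  also have "\<dots> = ((real d / (2 * q)) powr (s/2)) powr (-2/s) * Y powr (-2/s)"
    using Y q d by (simp add: I0 powr_mult)
  also have "((real d / (2 * q)) powr (s/2)) powr (-2/s) = 2 * q / real d"
    using q s d by (simp add: powr_powr powr_minus_divide)
  finally show ?thesis by (simp add: Y_def)
qed

theorem mainTheorem11:
  fixes q s :: real
  assumes "0 < q" "q \<le> 1" "0 < s" "s \<le> 2"
  shows "(\<lambda>d::nat. (sigma_bar q s d)^2 - 2*q/real d - (2-s)*(6-q)/(2*(real d)^2))
           \<in> o(\<lambda>d. 1/(real d)^2)"
proof -
  define a p where "a = s/2" and "p = q/2"
  have a: "0 < a" "a \<le> 1" and p: "0 < p" "p \<le> 1" using assms by (simp_all add: a_def p_def)
  define \<kappa> where "\<kappa> = a * (a - 1) * (3 - p) / (2 * p)"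
  define X where "X d = (\<Sum>n\<le>d. binom_weight p d n * half_gamma_ratio a n) / (2 powr (-a) * (real d * p) powr a) - 1" for d
  have "(\<lambda>d. X d - \<kappa> / real d) \<in> O(\<lambda>d. real d powr (-3/2))"
    using binom_expect_half_gamma_ratio_relative_expansion[OF a p] by (simp add: X_def \<kappa>_def)
  then have "(\<lambda>d. (1 + X d) powr (-1/a) - 1 - (-1/a) * \<kappa> / real d) \<in> o(\<lambda>d. 1 / real d)"
    by (rule powr_one_plus_expansion)
  moreover have "(\<lambda>d::nat. 2 * q / real d) \<in> O(\<lambda>d. 1 / real d)"
    using cmult_in_bigo_iff[of "2 * q" "\<lambda>d::nat. 1 / real d"] by simp
  ultimately have "(\<lambda>d. 2 * q / real d * ((1 + X d) powr (-1/a) - 1 - (-1/a) * \<kappa> / real d))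
      \<in> o(\<lambda>d. 1 / real d * (1 / real d))"
    by (intro landau_o.big_small_mult)
  moreover have "eventually (\<lambda>d. 2 * q / real d * ((1 + X d) powr (-1/a) - 1 - (-1/a) * \<kappa> / real d)
      = (sigma_bar q s d)^2 - 2*q/real d - (2-s)*(6-q)/(2*(real d)^2)) sequentially"
    using eventually_gt_at_top[of "0::nat"]
  proof eventually_elim
    case (elim d)
    then show ?case
      using sigma_bar_sq_eq[of q s d] assms
      by (simp add: X_def \<kappa>_def a_def p_def field_simps power2_eq_square)
  qed
  ultimately show ?thesis by (simp add: landau_o.small.in_cong power2_eq_square)
qed

end
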